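(* Let $m$ be a non-negative integer, let $A$ be a $k$-tuple of elements of $\mathbb{Z}/m\mathbb{Z}$ and let $\lambda,p$ be positive integers with $k\mid p$. Then the orbit of $S=\mathrm{IAP}(A,AX_k)$ is $(p,\lambda p)$-periodic if and only if $\pi_{m/\gcd(p/k,m)}(AX_k)=0$ and $A\in\mathrm{Lker}_m M_k^{(\lambda p)}$, where $M_k^{(\lambda p)}=W_k^{(\lambda p)}+X_kT_k^{(\lambda p)}$ and $W_k^{(\lambda p)}=C_k^{(\lambda p)}+(-1)^{\lambda p+1}I_k$.
   Context: $\mathbb{Z}/0\mathbb{Z}=\mathbb{Z}$. For $d\mid m$, $\pi_d$ is reduction from $\mathbb{Z}/m\mathbb{Z}$ to $\mathbb{Z}/d\mathbb{Z}$, entrywise. Tuples are row vectors and integer matrices act after reduction mod $m$. $X_k=(\delta_{r,s}+\delta_{r,k-s+1})_{1\le r,s\le k}$. For $k$-tuples $A=(a_0,\dots,a_{k-1})$, $D=(d_0,\dots,d_{k-1})$, $\mathrm{IAP}(A,D)=(u_j)_{j\in\mathbb{Z}}$ with $u_{qk+r}=a_r+qd_r$. The orbit of $(u_j)_{j\in\mathbb{Z}}$ is $(a_{i,j})_{(i,j)\in\mathbb{N}\times\mathbb{Z}}$ with $a_{0,j}=u_j$, $a_{i,j}=-a_{i-1,j}-a_{i-1,j+1}$; it is $(p,q)$-periodic if $a_{i+q,j}=a_{i,j+p}=a_{i,j}$ for all $(i,j)$. $C_k^{(i)}=\big(\sum_{\alpha\in\mathbb{Z}}\binom{i}{\alpha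 k+r-s}\big)_{1\le r,s\le k}$, $T_k^{(i)}=\big(\sum_{\alpha\in\mathbb{Z}}\alpha\binom{i}{\alpha k+r-s}\big)_{1\le r,s\le k}$ with $\binom{a}{b}=0$ if $b<0$ or $b>a$. $\mathrm{Lker}_m M=\{X\in(\mathbb{Z}/m\mathbb{Z})^{n}: X\pi_m(M)=0\}$. *)

theory Defs
  imports "HOL-Number_Theory.Number_Theory"
begin

text \<open>Elements of Z/mZ are represented by integers; equality in Z/mZ is
  congruence modulo m (for m = 0 this is equality in Z). A k-tuple is a function
  nat => int, entries indexed 0..k-1; a k x k matrix is nat => nat => int,
  entries indexed 0..k-1 (so the paper's index r corresponds to r-1 here).\<close>

definition matX :: "nat \<Rightarrow> nat \<Rightarrow> nat \<Rightarrow> int" where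
  "matX k r s = (if r = s then 1 else 0) + (if r = k - 1 - s then 1 else 0)"

definition matI :: "nat \<Rightarrow> nat \<Rightarrow> int" where
  "matI r s = (if r = s then 1 else 0)"

definition vecmat :: "nat \<Rightarrow> (nat \<Rightarrow> int) \<Rightarrow> (nat \<Rightarrow> nat \<Rightarrow> int) \<Rightarrow> nat \<Rightarrow> int" where
  "vecmat k A M s = (\<Sum>r<k. A r * M r s)"

definition matmul :: "nat \<Rightarrow> (nat \<Rightarrow> nat \<Rightarrow> int) \<Rightarrow> (nat \<Rightarrow> nat \<Rightarrow> int) \<Rightarrow> nat \<Rightarrow> nat \<Rightarrow> int" where
  "matmul k M N r s = (\<Sum>t<k. M r t * N t s)"

definition binz :: "nat \<Rightarrow> int \<Rightarrow> int" where
  "binz i b = (if 0 \<le> b \<and> b \<le> int i then int (i choose nat b) else 0)"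

text \<open>C_k^(i) and T_k^(i): the sums over alpha in Z are taken over the (finite, for k > 0)
  set of alpha for which the binomial coefficient can be nonzero; all other terms vanish.\<close>
definition matC :: "nat \<Rightarrow> nat \<Rightarrow> nat \<Rightarrow> nat \<Rightarrow> int" where
  "matC k i r s = (\<Sum>\<alpha> \<in> {\<alpha>::int. 0 \<le> \<alpha> * int k + int r - int s \<and> \<alpha> * int k + int r - int s \<le> int i}.
                      binz i (\<alpha> * int k + int r - int s))"

definition matT :: "nat \<Rightarrow> nat \<Rightarrow> nat \<Rightarrow> nat \<Rightarrow> int" where
  "matT k i r s = (\<Sum>\<alpha> \<in> {\<alpha>::int. 0 \<le> \<alpha> * int k + int r - int s \<and> \<alpha> * int k + int r - int s \<le> int i}.
                      \<alpha> * binz i (\<alpha> * int k + int r - int s))"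

definition matW :: "nat \<Rightarrow> nat \<Rightarrow> nat \<Rightarrow> nat \<Rightarrow> int" where
  "matW k i r s = matC k i r s + (-1) ^ (i + 1) * matI r s"

definition matM :: "nat \<Rightarrow> nat \<Rightarrow> nat \<Rightarrow> nat \<Rightarrow> int" where
  "matM k i r s = matW k i r s + matmul k (matX k) (matT k i) r s"

definition in_Lker :: "nat \<Rightarrow> nat \<Rightarrow> (nat \<Rightarrow> nat \<Rightarrow> int) \<Rightarrow> (nat \<Rightarrow> int) \<Rightarrow> bool" where
  "in_Lker m k M X \<longleftrightarrow> (\<forall>s<k. [vecmat k X M s = 0] (mod int m))"

definition IAP :: "nat \<Rightarrow> (nat \<Rightarrow> int) \<Rightarrow> (nat \<Rightarrow> int) \<Rightarrow> int \<Rightarrow> int" where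
  "IAP k A D j = A (nat (j mod int k)) + (j div int k) * D (nat (j mod int k))"

fun orbit :: "(int \<Rightarrow> int) \<Rightarrow> nat \<Rightarrow> int \<Rightarrow> int" where
  "orbit u 0 j = u j"
| "orbit u (Suc i) j = - orbit u i j - orbit u i (j + 1)"

definition orbit_periodic :: "nat \<Rightarrow> (int \<Rightarrow> int) \<Rightarrow> nat \<Rightarrow> nat \<Rightarrow> bool" where
  "orbit_periodic m u p q \<longleftrightarrow>
     (\<forall>i j. [orbit u (i + q) j = orbit u i j] (mod int m) \<and>
            [orbit u i (j + int p) = orbit u i j] (mod int m))"

end

theory Submission
  imports Defs
begin

(* The orbit operator is linear and commutes with translations, and by Pascal's rule
   a_(N,j) = (-1)^N * sum_l binom(N,l) u_(j+l).  Hence (p,q)-periodicity of the orbit amounts to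
   p-periodicity of u together with agreement of row q with row 0.  For u = IAP(A,D), translating
   by p adds (p/k) D, which gives the first condition.  Grouping the binomial sum by residues
   mod k turns row N minus row 0 on the window 0..k-1 into (-1)^N (A M_k^(N))_s.  To pass from
   the window to all of Z: E = (row N) - u has a k-periodic k-th difference because u is an IAP,
   and D = A X_k makes u antisymmetric about -1/2; as p divides N, E is then antisymmetric as
   well, so it vanishes on -k..k-1 and hence everywhere. *)

lemma cong_shift_int_mult:
  fixes f :: "int \<Rightarrow> int" and M :: int
  assumes "\<And>j. [f (j + c) = f j] (mod M)"
  shows "[f (j + t * c) = f j] (mod M)"
proof (induction t rule: int_induct[where k = 0])
  case base
  then show ?case by simp
next
  case (step1 t)
  have "[f (j + (t + 1) * c) = f (j + t * c)] (mod M)"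
    using assms[of "j + t * c"] by (simp add: algebra_simps)
  then show ?case using step1(2) by (rule cong_trans)
next
  case (step2 t)
  have "[f (j + (t - 1) * c) = f (j + t * c)] (mod M)"
    using assms[of "j + (t - 1) * c"] by (simp add: algebra_simps cong_sym_eq)
  then show ?case using step2(2) by (rule cong_trans)
qed

lemma cong_0_if_periodic_window:
  fixes f :: "int \<Rightarrow> int" and M :: int
  assumes "k > 0" and "\<And>j. [f (j + k) = f j] (mod M)"
    and "\<And>r. 0 \<le> r \<Longrightarrow> r < k \<Longrightarrow> [f r = 0] (mod M)"
  shows "[f j = 0] (mod M)"
proof -
  have "[f (j mod k + j div k * k) = f (j mod k)] (mod M)"
    by (rule cong_shift_int_mult) (rule assms(2))
  then have "[f j = f (j mod k)] (mod M)"
    by (simp only: mod_div_mult_eq)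
  also have "[f (j mod k) = 0] (mod M)"
    using assms(1,3) by simp
  finally show ?thesis .
qed

lemma cong_0_if_difference_periodic:
  fixes E F :: "int \<Rightarrow> int" and M :: int
  assumes k: "k > 0"
    and E: "\<And>j. E (j + k) = E j + F j" and F: "\<And>j. F (j + k) = F j"
    and window: "\<And>r. - k \<le> r \<Longrightarrow> r < k \<Longrightarrow> [E r = 0] (mod M)"
  shows "[E j = 0] (mod M)"
proof -
  have F_window: "[F r = 0] (mod M)" if "0 \<le> r" "r < k" for r
  proof -
    have "F r = E r - E (r - k)"
      using E[of "r - k"] F[of "r - k"] by simp
    then show ?thesis
      using cong_diff[OF window[of r] window[of "r - k"]] that by simp
  qed
  have E_periodic: "[E (j + k) = E j] (mod M)" for j
  proof -
    have "[F j = 0] (mod M)"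
      by (rule cong_0_if_periodic_window[OF k]) (simp_all add: F F_window)
    then have "[E j + F j = E j + 0] (mod M)"
      by (rule cong_add[OF cong_refl])
    then show ?thesis by (simp add: E)
  qed
  show ?thesis
    by (rule cong_0_if_periodic_window[where f = E, OF k E_periodic]) (simp add: window)
qed

lemma dvd_mult_iff_div_gcd_dvd:
  fixes a m x :: int
  assumes "a \<noteq> 0"
  shows "m dvd a * x \<longleftrightarrow> m div gcd a m dvd x"
proof -
  define g where "g = gcd a m"
  have "g \<noteq> 0" using assms by (simp add: g_def)
  have m: "m = m div g * g" and a: "a = a div g * g"
    by (simp_all add: g_def)
  have "coprime (m div g) (a div g)"
    using div_gcd_coprime[of a m] assms by (simp add: g_def coprime_commute)
  have "m dvd a * x \<longleftrightarrow> m div g * g dvd a div g * x * g"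
    by (subst m, subst a) (simp add: algebra_simps)
  also have "\<dots> \<longleftrightarrow> m div g dvd a div g * x"
    using \<open>g \<noteq> 0\<close> by simp
  also have "\<dots> \<longleftrightarrow> m div g dvd x"
    using \<open>coprime (m div g) (a div g)\<close> by (rule coprime_dvd_mult_right_iff)
  finally show ?thesis by (simp add: g_def)
qed

lemma sum_atMost_by_residue:
  fixes g :: "int \<Rightarrow> 'a::comm_monoid_add"
  assumes k: "k > 0"
  shows "(\<Sum>l\<le>N. g (int s + int l)) =
    (\<Sum>r<k. \<Sum>\<alpha>\<in>{\<alpha>. 0 \<le> \<alpha> * int k + int r - int s \<and> \<alpha> * int k + int r - int s \<le> int N}.
       g (\<alpha> * int k + int r))"
proof -
  define S where "S r = {\<alpha>. 0 \<le> \<alpha> * int k + int r - int s \<and> \<alpha> * int k + int r - int s \<le> int N}"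
    for r
  have "finite (S r)" for r
  proof -
    have "inj (\<lambda>\<alpha>. \<alpha> * int k + int r - int s)"
      using k by (auto intro: injI)
    then have "finite ((\<lambda>\<alpha>. \<alpha> * int k + int r - int s) -` {0..int N})"
      by (intro finite_vimageI) simp_all
    moreover have "S r = (\<lambda>\<alpha>. \<alpha> * int k + int r - int s) -` {0..int N}"
      by (auto simp: S_def)
    ultimately show ?thesis by simp
  qed
  define decompose where
    "decompose l = (nat ((int s + int l) mod int k), (int s + int l) div int k)" for l
  define recompose where "recompose = (\<lambda>(r, \<alpha>). nat (\<alpha> * int k + int r - int s))"
  have "(\<Sum>r<k. \<Sum>\<alpha>\<in>S r. g (\<alpha> * int k + int r)) = (\<Sum>(r, \<alpha>)\<in>Sigma {..<k} S. g (\<alpha> * int k + int r))"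
    using \<open>\<And>r. finite (S r)\<close> by (simp add: sum.Sigma)
  also have "\<dots> = (\<Sum>l\<le>N. g (int s + int l))"
  proof (rule sum.reindex_bij_witness[where i = decompose and j = recompose])
    fix a assume "a \<in> Sigma {..<k} S"
    then obtain r \<alpha> where a: "a = (r, \<alpha>)" and r: "r < k"
      and l: "0 \<le> \<alpha> * int k + int r - int s" "\<alpha> * int k + int r - int s \<le> int N"
      by (auto simp: S_def)
    then have sl: "int s + int (recompose a) = \<alpha> * int k + int r"
      by (simp add: recompose_def)
    show "decompose (recompose a) = a"
      unfolding decompose_def sl using a r k by simp
    show "recompose a \<in> {..N}"
      using a l by (auto simp: recompose_def)
    show "g (int s + int (recompose a)) = (case a of (r, \<alpha>) \<Rightarrow> g (\<alpha> * int k + int r))"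
      unfolding sl using a by simp
  next
    fix l assume "l \<in> {..N}"
    moreover have "(int s + int l) div int k * int k + (int s + int l) mod int k = int s + int l"
      by simp
    moreover have "0 \<le> (int s + int l) mod int k" "(int s + int l) mod int k < int k"
      using k by simp_all
    ultimately show "recompose (decompose l) = l" and "decompose l \<in> Sigma {..<k} S"
      by (auto simp: S_def nat_less_iff decompose_def recompose_def)
  qed
  finally show ?thesis by (simp add: S_def)
qed

lemma orbit_add: "orbit (\<lambda>x. v x + w x) i j = orbit v i j + orbit w i j"
  by (induction i arbitrary: j) auto

lemma orbit_shift: "orbit (\<lambda>x. v (x + c)) i j = orbit v i (j + c)"
  by (induction i arbitrary: j) (auto simp: algebra_simps)

lemma orbit_orbit: "orbit (orbit v n) i j = orbit v (n + i) j"
  by (induction i arbitrary: j) auto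

lemma orbit_cong_mod:
  fixes M :: int
  assumes "\<And>j. [v j = w j] (mod M)"
  shows "[orbit v i j = orbit w i j] (mod M)"
proof (induction i arbitrary: j)
  case 0
  then show ?case using assms by simp
next
  case (Suc i)
  show ?case
    using cong_diff[OF cong_minus_minus_iff[THEN iffD2, OF Suc[of j]] Suc[of "j + 1"]] by simp
qed

lemma orbit_shift_cong_mod:
  fixes M :: int
  assumes "\<And>j. [v (j + c) = v j] (mod M)"
  shows "[orbit v i (j + c) = orbit v i j] (mod M)"
  using orbit_cong_mod[of "\<lambda>x. v (x + c)" v M i j] assms by (simp add: orbit_shift)

lemma orbit_reflect:
  assumes "\<And>j. v (-1 - j) = - v j"
  shows "orbit v i (-1 - int i - j) = - orbit v i j"
proof (induction i arbitrary: j)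
  case 0
  then show ?case using assms by simp
next
  case (Suc i)
  have "-1 - int (Suc i) - j = -1 - int i - (j + 1)" "-1 - int i - (j + 1) + 1 = -1 - int i - j"
    by simp_all
  then have "orbit v (Suc i) (-1 - int (Suc i) - j)
           = - orbit v i (-1 - int i - (j + 1)) - orbit v i (-1 - int i - j)"
    by (simp only: orbit.simps)
  then show ?case using Suc.IH[of j] Suc.IH[of "j + 1"] by simp
qed

lemma orbit_closed_form:
  "orbit v i j = (-1)^i * (\<Sum>l\<le>i. int (i choose l) * v (j + int l))"
proof (induction i arbitrary: j)
  case 0
  then show ?case by simp
next
  case (Suc i)
  let ?f = "\<lambda>l. v (j + int l)"
  have pascal: "(\<Sum>l\<le>Suc i. int (Suc i choose l) * ?f l)
       = (\<Sum>l\<le>i. int (i choose l) * ?f l) + (\<Sum>l\<le>i. int (i choose l) * ?f (Suc l))"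
  proof -
    have "(\<Sum>l\<le>Suc i. int (Suc i choose l) * ?f l)
        = ?f 0 + (\<Sum>l\<le>i. int (Suc i choose Suc l) * ?f (Suc l))"
      by (subst sum.atMost_Suc_shift) simp
    also have "\<dots> = ?f 0 + (\<Sum>l\<le>i. int (i choose l) * ?f (Suc l))
                   + (\<Sum>l\<le>i. int (i choose Suc l) * ?f (Suc l))"
      by (simp add: sum.distrib algebra_simps)
    also have "(\<Sum>l\<le>i. int (i choose Suc l) * ?f (Suc l))
             = (\<Sum>l\<le>Suc i. int (i choose l) * ?f l) - ?f 0"
      by (simp only: sum.atMost_Suc_shift) simp
    also have "(\<Sum>l\<le>Suc i. int (i choose l) * ?f l) = (\<Sum>l\<le>i. int (i choose l) * ?f l)"
      by simp
    finally show ?thesis by simp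
  qed
  have "(\<Sum>l\<le>i. int (i choose l) * ?f (Suc l)) = (\<Sum>l\<le>i. int (i choose l) * v (j + 1 + int l))"
    by (simp add: algebra_simps)
  then show ?case using pascal Suc[of j] Suc[of "j + 1"] by (simp add: algebra_simps)
qed

lemma orbit_periodic_iff:
  "orbit_periodic m u p q \<longleftrightarrow>
     (\<forall>j. [u (j + int p) = u j] (mod int m)) \<and> (\<forall>j. [orbit u q j = u j] (mod int m))"
proof
  assume "orbit_periodic m u p q"
  then have "[orbit u (0 + q) j = orbit u 0 j] (mod int m) \<and>
      [orbit u 0 (j + int p) = orbit u 0 j] (mod int m)" for j
    unfolding orbit_periodic_def by blast
  then show "(\<forall>j. [u (j + int p) = u j] (mod int m)) \<and> (\<forall>j. [orbit u q j = u j] (mod int m))"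
    by simp
next
  assume row0: "(\<forall>j. [u (j + int p) = u j] (mod int m)) \<and> (\<forall>j. [orbit u q j = u j] (mod int m))"
  have "[orbit u (i + q) j = orbit u i j] (mod int m)" for i j
    using orbit_cong_mod[of "orbit u q" u "int m" i j] row0 by (simp add: orbit_orbit add.commute)
  moreover have "[orbit u i (j + int p) = orbit u i j] (mod int m)" for i j
    using orbit_shift_cong_mod row0 by blast
  ultimately show "orbit_periodic m u p q"
    unfolding orbit_periodic_def by blast
qed

lemma orbit_reflect_cong_mod:
  fixes u :: "int \<Rightarrow> int" and M :: int
  assumes reflect: "\<And>j. u (-1 - j) = - u j"
    and period: "\<And>j. [u (j + int p) = u j] (mod M)" and "p dvd N"
  shows "[orbit u N (-1 - j) = - orbit u N j] (mod M)"
proof -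
  obtain t where N: "N = p * t" using \<open>p dvd N\<close> ..
  have "[orbit u N (-1 - int N - j + int t * int p) = orbit u N (-1 - int N - j)] (mod M)"
    by (intro cong_shift_int_mult orbit_shift_cong_mod period)
  then have "[orbit u N (-1 - j) = orbit u N (-1 - int N - j)] (mod M)"
    by (simp add: N)
  also have "orbit u N (-1 - int N - j) = - orbit u N j"
    using reflect by (rule orbit_reflect)
  finally show ?thesis .
qed

lemma orbit_cong_self_iff_window:
  fixes u d :: "int \<Rightarrow> int" and M :: int
  assumes k: "k > 0"
    and reflect: "\<And>j. u (-1 - j) = - u j"
    and step: "\<And>j. u (j + int k) = u j + d j" and d: "\<And>j. d (j + int k) = d j"
    and period: "\<And>j. [u (j + int p) = u j] (mod M)" and "p dvd N"
  shows "(\<forall>j. [orbit u N j = u j] (mod M)) \<longleftrightarrow> (\<forall>s<k. [orbit u N (int s) = u (int s)] (mod M))"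
proof
  assume window: "\<forall>s<k. [orbit u N (int s) = u (int s)] (mod M)"
  define E where "E j = orbit u N j - u j" for j
  define F where "F j = orbit d N j - d j" for j
  have E_step: "E (j + int k) = E j + F j" for j
  proof -
    have "orbit u N (j + int k) = orbit (\<lambda>x. u x + d x) N j"
      using orbit_shift[of u "int k" N j] by (simp add: step)
    then show ?thesis by (simp add: E_def F_def orbit_add step)
  qed
  have F_period: "F (j + int k) = F j" for j
    using orbit_shift[of d "int k" N j] by (simp add: F_def d)
  have E_reflect: "[E (-1 - j) = - E j] (mod M)" for j
  proof -
    have "[orbit u N (-1 - j) + u j = - orbit u N j + u j] (mod M)"
      using orbit_reflect_cong_mod[OF reflect period \<open>p dvd N\<close>] by (rule cong_add) simp
    then show ?thesis by (simp add: E_def reflect)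
  qed
  have E_window: "[E r = 0] (mod M)" if "0 \<le> r" "r < int k" for r
    using window that unfolding E_def cong_diff_iff_cong_0
    by (metis nat_less_iff int_nat_eq)
  have "[E j = 0] (mod M)" for j
  proof (rule cong_0_if_difference_periodic[where E = E and F = F, OF _ E_step F_period])
    fix r assume r: "- int k \<le> r" "r < int k"
    show "[E r = 0] (mod M)"
    proof (cases "0 \<le> r")
      case True
      then show ?thesis using r E_window by simp
    next
      case False
      have "[E r = - E (-1 - r)] (mod M)"
        using E_reflect[of "-1 - r"] by simp
      also have "[- E (-1 - r) = - 0] (mod M)"
        using False r by (intro cong_minus_minus_iff[THEN iffD2] E_window) simp_all
      finally show ?thesis by simp
    qed
  qed (use k in simp)
  then show "\<forall>j. [orbit u N j = u j] (mod M)"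
    by (simp add: E_def cong_diff_iff_cong_0)
qed simp

lemma IAP_residue: "r < k \<Longrightarrow> IAP k A D (\<alpha> * int k + int r) = A r + \<alpha> * D r"
  by (simp add: IAP_def)

lemma IAP_add_k: "k > 0 \<Longrightarrow> IAP k A D (j + int k) = IAP k A D j + D (nat (j mod int k))"
  by (simp add: IAP_def algebra_simps)

lemma IAP_add_period:
  assumes "k dvd p"
  shows "IAP k A D (j + int p) = IAP k A D j + int (p div k) * D (nat (j mod int k))"
proof (cases "k = 0")
  case True
  then show ?thesis using assms by (simp add: IAP_def)
next
  case False
  obtain c where p: "p = k * c" using assms by blast
  then have "j + int p = j + int c * int k" by simp
  then show ?thesis using False p by (simp add: IAP_def algebra_simps)
qed

lemma IAP_period_cong_iff:
  assumes "k dvd p" and "p > 0"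
  shows "(\<forall>j. [IAP k A D (j + int p) = IAP k A D j] (mod int m)) \<longleftrightarrow>
         (\<forall>s<k. [D s = 0] (mod int (m div gcd (p div k) m)))"
proof -
  have "k > 0" and "p div k > 0"
    using assms by (auto elim!: dvdE)
  have step_iff: "[IAP k A D (j + int p) = IAP k A D j] (mod int m) \<longleftrightarrow>
      [D (nat (j mod int k)) = 0] (mod int (m div gcd (p div k) m))" for j
  proof -
    let ?c = "int (p div k)" and ?d = "D (nat (j mod int k))"
    have "[IAP k A D (j + int p) = IAP k A D j] (mod int m) \<longleftrightarrow> int m dvd ?c * ?d"
      using cong_add_lcancel_0[of "IAP k A D j" "?c * ?d" "int m"]
      by (simp add: IAP_add_period[OF assms(1)] cong_0_iff)
    also have "\<dots> \<longleftrightarrow> int m div gcd ?c (int m) dvd ?d"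
      using \<open>p div k > 0\<close> by (simp add: dvd_mult_iff_div_gcd_dvd)
    finally show ?thesis
      by (simp add: cong_0_iff flip: zdiv_int)
  qed
  show ?thesis
  proof
    assume "\<forall>j. [IAP k A D (j + int p) = IAP k A D j] (mod int m)"
    then have "[D (nat (int s mod int k)) = 0] (mod int (m div gcd (p div k) m))" for s
      by (simp only: step_iff)
    then show "\<forall>s<k. [D s = 0] (mod int (m div gcd (p div k) m))"
      by (metis mod_less nat_int of_nat_mod)
  next
    assume "\<forall>s<k. [D s = 0] (mod int (m div gcd (p div k) m))"
    moreover have "nat (j mod int k) < k" for j
      using \<open>k > 0\<close> by (simp add: nat_less_iff)
    ultimately show "\<forall>j. [IAP k A D (j + int p) = IAP k A D j] (mod int m)"
      by (simp add: step_iff)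
  qed
qed

lemma IAP_reflect:
  assumes "k > 0" and D: "\<And>s. s < k \<Longrightarrow> D s = A s + A (k - 1 - s)"
  shows "IAP k A D (-1 - j) = - IAP k A D j"
proof -
  define q where "q = j div int k"
  define r where "r = nat (j mod int k)"
  have r: "r < k" and j: "j = q * int k + int r"
    using \<open>k > 0\<close> by (simp_all add: r_def q_def nat_less_iff)
  then have reflected: "-1 - j = (- q - 1) * int k + int (k - 1 - r)"
    by (simp add: algebra_simps of_nat_diff)
  have "IAP k A D (-1 - j) = A (k - 1 - r) + (- q - 1) * D (k - 1 - r)"
    unfolding reflected using \<open>k > 0\<close> by (simp add: IAP_residue)
  moreover have "IAP k A D j = A r + q * D r"
    using j r by (simp add: IAP_residue)
  moreover have "D (k - 1 - r) = A (k - 1 - r) + A r" and "D r = A r + A (k - 1 - r)"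
    using D[of "k - 1 - r"] D[of r] r by simp_all
  ultimately show ?thesis by (simp add: algebra_simps)
qed

lemma sum_binomial_IAP:
  assumes "k > 0"
  shows "(\<Sum>l\<le>N. int (N choose l) * IAP k A D (int s + int l))
       = vecmat k A (matC k N) s + vecmat k D (matT k N) s"
proof -
  have "(\<Sum>l\<le>N. int (N choose l) * IAP k A D (int s + int l))
      = (\<Sum>l\<le>N. binz N (int s + int l - int s) * IAP k A D (int s + int l))"
    by (simp add: binz_def)
  also have "\<dots> = (\<Sum>r<k. \<Sum>\<alpha>\<in>{\<alpha>. 0 \<le> \<alpha> * int k + int r - int s \<and> \<alpha> * int k + int r - int s \<le> int N}.
       binz N (\<alpha> * int k + int r - int s) * IAP k A D (\<alpha> * int k + int r))"
    by (rule sum_atMost_by_residue[OF assms, where g = "\<lambda>x. binz N (x - int s) * IAP k A D x"])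
  also have "\<dots> = (\<Sum>r<k. \<Sum>\<alpha>\<in>{\<alpha>. 0 \<le> \<alpha> * int k + int r - int s \<and> \<alpha> * int k + int r - int s \<le> int N}.
       binz N (\<alpha> * int k + int r - int s) * (A r + \<alpha> * D r))"
    by (intro sum.cong refl) (simp add: IAP_residue)
  also have "\<dots> = vecmat k A (matC k N) s + vecmat k D (matT k N) s"
    by (simp add: vecmat_def matC_def matT_def sum_distrib_left sum_distrib_right sum.distrib
        algebra_simps)
  finally show ?thesis .
qed

lemma vecmat_matmul: "vecmat k A (matmul k M N) s = vecmat k (vecmat k A M) N s"
  unfolding vecmat_def matmul_def
  by (simp add: sum_distrib_left sum_distrib_right mult.assoc) (rule sum.swap)

lemma vecmat_matI: "s < k \<Longrightarrow> vecmat k A matI s = A s"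
  by (simp add: vecmat_def matI_def if_distrib cong: if_cong)

lemma vecmat_matX:
  assumes "s < k"
  shows "vecmat k A (matX k) s = A s + A (k - 1 - s)"
proof -
  have "vecmat k A (matX k) s = (\<Sum>r<k. A r * (if r = s then 1 else 0))
      + (\<Sum>r<k. A r * (if r = k - 1 - s then 1 else 0))"
    by (simp add: vecmat_def matX_def sum.distrib algebra_simps)
  then show ?thesis
    using assms by (simp add: if_distrib cong: if_cong)
qed

lemma vecmat_matM:
  assumes "s < k"
  shows "vecmat k A (matM k N) s = vecmat k A (matC k N) s + (-1)^(N + 1) * A s
           + vecmat k (vecmat k A (matX k)) (matT k N) s"
proof -
  have "vecmat k A (matM k N) s = (\<Sum>r<k. A r * matC k N r s + (-1)^(N + 1) * (A r * matI r s)
      + A r * matmul k (matX k) (matT k N) r s)"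
    unfolding vecmat_def matM_def matW_def by (intro sum.cong refl) (simp add: algebra_simps)
  also have "\<dots> = vecmat k A (matC k N) s + (-1)^(N + 1) * vecmat k A matI s
      + vecmat k A (matmul k (matX k) (matT k N)) s"
    unfolding vecmat_def by (simp only: sum.distrib sum_distrib_left)
  finally show ?thesis
    using assms by (simp add: vecmat_matmul vecmat_matI)
qed

lemma orbit_IAP_matM:
  assumes "k > 0" and "s < k"
  shows "orbit (IAP k A (vecmat k A (matX k))) N (int s) - IAP k A (vecmat k A (matX k)) (int s)
       = (-1)^N * vecmat k A (matM k N) s"
proof -
  let ?D = "vecmat k A (matX k)"
  have "orbit (IAP k A ?D) N (int s) = (-1)^N * (vecmat k A (matC k N) s + vecmat k ?D (matT k N) s)"
    by (simp add: orbit_closed_form sum_binomial_IAP[OF assms(1)])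
  moreover have "IAP k A ?D (int s) = A s"
    using IAP_residue[OF assms(2), of A ?D 0] by simp
  ultimately show ?thesis
    using assms(2) by (simp add: vecmat_matM algebra_simps)
qed

lemma in_Lker_matM_iff_orbit_window:
  assumes "k > 0"
  shows "in_Lker m k (matM k N) A \<longleftrightarrow>
    (\<forall>s<k. [orbit (IAP k A (vecmat k A (matX k))) N (int s)
            = IAP k A (vecmat k A (matX k)) (int s)] (mod int m))"
  unfolding in_Lker_def cong_iff_dvd_diff
  using assms by (simp add: orbit_IAP_matM dvd_mult_unit_iff' is_unit_power_iff)

theorem theorem6:
  fixes m k p lam :: nat and A :: "nat \<Rightarrow> int"
  assumes "lam > 0" and "p > 0" and "k dvd p"
  shows "orbit_periodic m (IAP k A (vecmat k A (matX k))) p (lam * p) \<longleftrightarrow>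
         ((\<forall>s<k. [vecmat k A (matX k) s = 0] (mod int (m div gcd (p div k) m))) \<and>
          in_Lker m k (matM k (lam * p)) A)"
proof -
  define D where "D = vecmat k A (matX k)"
  define u where "u = IAP k A D"
  have "k > 0" using assms(2,3) by (auto intro: gr0I)
  have reflect: "u (-1 - j) = - u j" for j
    unfolding u_def D_def using \<open>k > 0\<close> by (rule IAP_reflect) (simp add: vecmat_matX)
  have step: "u (j + int k) = u j + D (nat (j mod int k))" for j
    unfolding u_def using \<open>k > 0\<close> by (rule IAP_add_k)
  have row0: "(\<forall>j. [u (j + int p) = u j] (mod int m)) \<longleftrightarrow>
      (\<forall>s<k. [D s = 0] (mod int (m div gcd (p div k) m)))"
    unfolding u_def by (rule IAP_period_cong_iff[OF assms(3,2)])
  have window: "in_Lker m k (matM k (lam * p)) A \<longleftrightarrow>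
      (\<forall>s<k. [orbit u (lam * p) (int s) = u (int s)] (mod int m))"
    unfolding u_def D_def by (rule in_Lker_matM_iff_orbit_window[OF \<open>k > 0\<close>])
  have "(\<forall>j. [orbit u (lam * p) j = u j] (mod int m)) \<longleftrightarrow>
      (\<forall>s<k. [orbit u (lam * p) (int s) = u (int s)] (mod int m))"
    if "\<forall>j. [u (j + int p) = u j] (mod int m)"
    using orbit_cong_self_iff_window[OF \<open>k > 0\<close> reflect step, of p "int m" "lam * p"] that
    by simp
  with row0 window show ?thesis
    unfolding orbit_periodic_iff u_def D_def by blast
qed

end
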